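(* Let $n\geq2$, let $q\in\mathbb{C}$ with $|q|>1$, fix $q^{1/2}$, and let $a_1,\ldots,a_n,b_1,\ldots,b_n$ be nonzero complex parameters with $\prod_{j=1}^n a_j=q^{(n-1)/2}$. Let $x_j(t),y_j(t)$ $(j=1,\ldots,n)$ be functions satisfying the system $q$-$P_{(n,n)}$: \[\begin{split} x_j(t)-x_{j-1}(t)&=\frac{a_jx_j(qt)}{1+x_j(qt)y_{j-1}(t)}-\frac{b_{j-1}x_{j-1}(qt)}{1+x_{j-1}(qt)y_{j-1}(t)},\\ y_j(qt)-y_{j-1}(qt)&=\frac{b_jy_j(t)}{1+x_j(qt)y_j(t)}-\frac{a_jy_{j-1}(t)}{1+x_j(qt)y_{j-1}(t)}, \end{split}\qquad (j=1,\ldots,n),\] where $b_0=q^{-1}b_n$, $x_0(t)=tx_n(t)$, $y_0(t)=q^{-1}t^{-1}y_n(t)$ (as functions of $t$), together with the relation \[ \prod_{j=1}^{n}a_j\frac{1+x_j(qt)y_j(t)}{1+x_j(qt)y_{j-1}(t)}=q^{(n-1)/2}, \] and suppose moreover that $y_j(t)=0$ for all $j=1,\ldots,n$. Then the vector $\mathbf{x}(t)={}^t[x_1(t),\ldots,x_n(t)]$ satisfies the linear $q$-difference system \[ \mathbf{x}(q^{-1}t)=\left(A_0+\frac{A_1}{1-q^{-1}t}\right)\mathbf{x}(t), \] where \[ A_0=\sum_{j=1}^{n}b_jE_{j,j}+\sum_{i=1}^{n}\sum_{j=i+1}^{n}(b_j-a_j)E_{i,j},\qquad A_1=\sum_{i=1}^{n}\sum_{j=1}^{n}(a_j-b_j)E_{i,j}.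 \]
   Context: $E_{i,j}$ denotes the $n\times n$ matrix unit with $1$ in the $(i,j)$ entry and zeros elsewhere. All denominators are assumed nonzero. *)

theory Defs
  imports Complex_Main "HOL-Library.Function_Algebras"
begin

text \<open>Matrices are functions nat => nat => complex indexed by 1..n;
  the matrix unit E_{i,j}.\<close>
definition matunit :: "nat \<Rightarrow> nat \<Rightarrow> (nat \<Rightarrow> nat \<Rightarrow> complex)" where
  "matunit i j = (\<lambda>k l. if k = i \<and> l = j then 1 else 0)"

definition smat :: "complex \<Rightarrow> (nat \<Rightarrow> nat \<Rightarrow> complex) \<Rightarrow> (nat \<Rightarrow> nat \<Rightarrow> complex)" where
  "smat c M = (\<lambda>k l. c * M k l)"

text \<open>Extension of the index range to j = 0 via the conventions
  b_0 = q^{-1} b_n, x_0(t) = t x_n(t), y_0(t) = q^{-1} t^{-1} y_n(t).\<close>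
definition bext :: "complex \<Rightarrow> nat \<Rightarrow> (nat \<Rightarrow> complex) \<Rightarrow> nat \<Rightarrow> complex" where
  "bext q n b j = (if j = 0 then b n / q else b j)"

definition xext :: "nat \<Rightarrow> (nat \<Rightarrow> complex \<Rightarrow> complex) \<Rightarrow> nat \<Rightarrow> complex \<Rightarrow> complex" where
  "xext n x j t = (if j = 0 then t * x n t else x j t)"

definition yext :: "complex \<Rightarrow> nat \<Rightarrow> (nat \<Rightarrow> complex \<Rightarrow> complex) \<Rightarrow> nat \<Rightarrow> complex \<Rightarrow> complex" where
  "yext q n y j t = (if j = 0 then y n t / (q * t) else y j t)"

definition A0 :: "nat \<Rightarrow> (nat \<Rightarrow> complex) \<Rightarrow> (nat \<Rightarrow> complex) \<Rightarrow> (nat \<Rightarrow> nat \<Rightarrow> complex)" where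
  "A0 n a b = (\<Sum>j\<in>{1..n}. smat (b j) (matunit j j))
     + (\<Sum>i\<in>{1..n}. \<Sum>j\<in>{i+1..n}. smat (b j - a j) (matunit i j))"

definition A1 :: "nat \<Rightarrow> (nat \<Rightarrow> complex) \<Rightarrow> (nat \<Rightarrow> complex) \<Rightarrow> (nat \<Rightarrow> nat \<Rightarrow> complex)" where
  "A1 n a b = (\<Sum>i\<in>{1..n}. \<Sum>j\<in>{1..n}. smat (a j - b j) (matunit i j))"

end

theory Submission
  imports Defs
begin

text \<open>For y = 0 the first equation of q-P(n,n) becomes linear: with s = t/q it reads
  x_j(s) - x_{j-1}(s) = a_j x_j(t) - b_{j-1} x_{j-1}(t). Summing from 1 to i expresses x_i(s)
  through the partial sums of a_k x_k(t) and b_k x_k(t) plus the boundary term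
  s (x_n(s) - b_n x_n(t)) coming from x_0 = s x_n; the case i = n determines that term as
  s/(1 - s) times the sum of (a_k - b_k) x_k(t), which is exactly the contribution of A_1.
  Only the first equation and y = 0 enter.\<close>

lemma sum_apply: "(sum f S) x = (\<Sum>k\<in>S. f k x)"
  by (induction S rule: infinite_finite_induct) (auto simp: plus_fun_def zero_fun_def)

lemma smat_matunit: "smat c (matunit k l) i j = (if k = i \<and> l = j then c else 0)"
  by (simp add: smat_def matunit_def)

lemma A0_entry:
  assumes i: "i \<in> {1..n}" and j: "j \<in> {1..n}"
  shows "A0 n a b i j = (if i = j then b j else 0) + (if i < j then b j - a j else 0)"
proof -
  have "(\<Sum>k\<in>{1..n}. smat (b k) (matunit k k) i j)
      = (\<Sum>k\<in>{1..n}. if k = i then (if i = j then b j else 0) else 0)"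
    by (intro sum.cong) (auto simp: smat_matunit)
  moreover have "(\<Sum>k\<in>{1..n}. \<Sum>l\<in>{k+1..n}. smat (b l - a l) (matunit k l) i j)
      = (\<Sum>k\<in>{1..n}. if k = i then (if i < j then b j - a j else 0) else 0)"
    using j by (intro sum.cong) (auto simp: smat_matunit)
  ultimately show ?thesis
    using i unfolding A0_def by (simp add: sum_apply)
qed

lemma A0_mult_vec:
  assumes i: "i \<in> {1..n}"
  shows "(\<Sum>j\<in>{1..n}. A0 n a b i j * v j) = b i * v i + (\<Sum>j\<in>{i<..n}. (b j - a j) * v j)"
proof -
  have split: "{1..n} = insert i ({1..<i} \<union> {i<..n})" using i by auto
  have "(\<Sum>j\<in>{1..n}. A0 n a b i j * v j)
      = (\<Sum>j\<in>insert i ({1..<i} \<union> {i<..n}). ((if i = j then b j else 0) + (if i < j then b j - a j else 0)) * v j)"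
    unfolding split[symmetric] by (intro sum.cong) (simp_all add: A0_entry[OF i])
  also have "\<dots> = b i * v i + (\<Sum>j\<in>{i<..n}. (b j - a j) * v j)"
    by (subst sum.insert, simp_all, subst sum.union_disjoint)
      (auto intro!: sum.neutral sum.cong)
  finally show ?thesis .
qed

lemma A1_entry:
  assumes "i \<in> {1..n}" "j \<in> {1..n}"
  shows "A1 n a b i j = a j - b j"
proof -
  have "A1 n a b i j = (\<Sum>k\<in>{1..n}. if k = i then a j - b j else 0)"
    unfolding A1_def sum_apply using assms by (intro sum.cong) (auto simp: smat_matunit)
  then show ?thesis using assms by simp
qed

lemma A0_A1_mult_vec:
  assumes i: "i \<in> {1..n}"
  shows "(\<Sum>j\<in>{1..n}. (A0 n a b i j + w * A1 n a b i j) * v j)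
    = (\<Sum>j\<in>{1..i}. a j * v j) - (\<Sum>j\<in>{1..<i}. b j * v j)
      + (w - 1) * (\<Sum>j\<in>{1..n}. (a j - b j) * v j)"
proof -
  have split: "{1..n} = {1..i} \<union> {i<..n}" using i by auto
  have last: "(\<Sum>j\<in>{1..i}. b j * v j) = b i * v i + (\<Sum>j\<in>{1..<i}. b j * v j)"
    using i by (simp add: atLeastLessThanSuc_atLeastAtMost[symmetric] sum.atLeastLessThan_Suc)
  have "(\<Sum>j\<in>{1..n}. (a j - b j) * v j)
      = (\<Sum>j\<in>{1..i}. (a j - b j) * v j) + (\<Sum>j\<in>{i<..n}. (a j - b j) * v j)"
    unfolding split by (rule sum.union_disjoint) auto
  also have "(\<Sum>j\<in>{1..i}. (a j - b j) * v j) = (\<Sum>j\<in>{1..i}. a j * v j) - (\<Sum>j\<in>{1..i}. b j * v j)"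
    by (simp add: sum_subtractf algebra_simps)
  also note last
  finally have D: "(\<Sum>j\<in>{1..n}. (a j - b j) * v j)
      = (\<Sum>j\<in>{1..i}. a j * v j) - (b i * v i + (\<Sum>j\<in>{1..<i}. b j * v j))
        + (\<Sum>j\<in>{i<..n}. (a j - b j) * v j)" .
  have "(\<Sum>j\<in>{1..n}. w * A1 n a b i j * v j) = w * (\<Sum>j\<in>{1..n}. (a j - b j) * v j)"
    unfolding sum_distrib_left mult.assoc by (intro sum.cong) (simp_all add: A1_entry[OF i])
  then have lhs: "(\<Sum>j\<in>{1..n}. (A0 n a b i j + w * A1 n a b i j) * v j)
      = b i * v i + (\<Sum>j\<in>{i<..n}. (b j - a j) * v j) + w * (\<Sum>j\<in>{1..n}. (a j - b j) * v j)"
    using A0_mult_vec[OF i] by (simp add: distrib_right sum.distrib)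
  have "(\<Sum>j\<in>{i<..n}. (b j - a j) * v j) = - (\<Sum>j\<in>{i<..n}. (a j - b j) * v j)"
    by (simp add: sum_negf[symmetric] algebra_simps)
  then show ?thesis
    unfolding lhs by (subst (1 2) D) (simp add: algebra_simps)
qed

lemma telescope_first_order:
  fixes u v a b :: "nat \<Rightarrow> 'a::comm_ring"
  assumes "\<And>j. j \<in> {1..i} \<Longrightarrow> u j - u (j - 1) = a j * v j - b (j - 1) * v (j - 1)"
  shows "u i = u 0 + (\<Sum>k\<in>{1..i}. a k * v k) - (\<Sum>k<i. b k * v k)"
  using assms
proof (induction i)
  case (Suc i)
  have step: "u (Suc i) - u i = a (Suc i) * v (Suc i) - b i * v i"
    using Suc.prems by fastforce
  have "u i = u 0 + (\<Sum>k\<in>{1..i}. a k * v k) - (\<Sum>k<i. b k * v k)"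
    using Suc by simp
  with step show ?case by (simp add: algebra_simps)
qed simp

lemma linear_qdiff_of_reduced_system:
  fixes x :: "nat \<Rightarrow> complex \<Rightarrow> complex"
  assumes q: "q \<noteq> 0" and s: "s \<noteq> 1" and i: "i \<in> {1..n}"
    and step: "\<And>j. j \<in> {1..n} \<Longrightarrow> xext n x j s - xext n x (j - 1) s
      = a j * xext n x j (q * s) - bext q n b (j - 1) * xext n x (j - 1) (q * s)"
  shows "x i s = (\<Sum>j\<in>{1..n}. (A0 n a b i j + A1 n a b i j / (1 - s)) * x j (q * s))"
proof -
  define v where "v j = x j (q * s)" for j
  define D where "D = (\<Sum>j\<in>{1..n}. (a j - b j) * v j)"
  define P where "P k = (\<Sum>j\<in>{1..k}. a j * v j) - (\<Sum>j\<in>{1..<k}. b j * v j)" for k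
  have partial: "x k s = s * (x n s - b n * v n) + P k" if k: "k \<in> {1..n}" for k
  proof -
    have "xext n x k s = xext n x 0 s + (\<Sum>j\<in>{1..k}. a j * xext n x j (q * s))
        - (\<Sum>j<k. bext q n b j * xext n x j (q * s))"
      using step k by (intro telescope_first_order) auto
    moreover have "(\<Sum>j\<in>{1..k}. a j * xext n x j (q * s)) = (\<Sum>j\<in>{1..k}. a j * v j)"
      by (intro sum.cong) (auto simp: xext_def v_def)
    moreover have "(\<Sum>j<k. bext q n b j * xext n x j (q * s)) = s * b n * v n + (\<Sum>j\<in>{1..<k}. b j * v j)"
    proof -
      have "{..<k} = insert 0 {1..<k}" using k by auto
      moreover have "(\<Sum>j\<in>{1..<k}. bext q n b j * xext n x j (q * s)) = (\<Sum>j\<in>{1..<k}. b j * v j)"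
        by (intro sum.cong) (auto simp: xext_def bext_def v_def)
      ultimately show ?thesis using q by (simp add: xext_def bext_def v_def)
    qed
    ultimately show ?thesis
      using k by (simp add: xext_def P_def algebra_simps)
  qed
  have "P n = D + b n * v n"
  proof -
    have "{1..n} = insert n {1..<n}" using i by auto
    then have "(\<Sum>j\<in>{1..n}. b j * v j) = b n * v n + (\<Sum>j\<in>{1..<n}. b j * v j)" by simp
    then show ?thesis by (simp add: P_def D_def sum_subtractf algebra_simps)
  qed
  with partial[of n] i have "(x n s - b n * v n) * (1 - s) = D"
    by (simp add: algebra_simps)
  moreover have "1 - s \<noteq> 0" using s by simp
  ultimately have "x n s - b n * v n = D / (1 - s)"
    by (simp add: eq_divide_eq)
  moreover have "s * (D / (1 - s)) = (1 / (1 - s) - 1) * D"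
    using \<open>1 - s \<noteq> 0\<close> by (simp add: field_simps)
  ultimately have "s * (x n s - b n * v n) = (1 / (1 - s) - 1) * D"
    by simp
  then have "x i s = P i + (1 / (1 - s) - 1) * D"
    using partial[OF i] by simp
  also have "\<dots> = (\<Sum>j\<in>{1..n}. (A0 n a b i j + 1 / (1 - s) * A1 n a b i j) * v j)"
    unfolding A0_A1_mult_vec[OF i] P_def D_def ..
  finally show ?thesis by (simp add: v_def)
qed

theorem mainTheorem3:
  fixes n :: nat and q sq :: complex
    and a b :: "nat \<Rightarrow> complex"
    and x y :: "nat \<Rightarrow> complex \<Rightarrow> complex"
  assumes n2: "n \<ge> 2"
    and q: "norm q > 1"
    and sq: "sq ^ 2 = q"
    and a_nz: "\<forall>j\<in>{1..n}. a j \<noteq> 0"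
    and b_nz: "\<forall>j\<in>{1..n}. b j \<noteq> 0"
    and prod_a: "(\<Prod>j\<in>{1..n}. a j) = sq ^ (n - 1)"
    and eq1: "\<forall>t. t \<noteq> 0 \<longrightarrow> (\<forall>j\<in>{1..n}.
        xext n x j t - xext n x (j - 1) t
        = a j * xext n x j (q * t) / (1 + xext n x j (q * t) * yext q n y (j - 1) t)
          - bext q n b (j - 1) * xext n x (j - 1) (q * t)
              / (1 + xext n x (j - 1) (q * t) * yext q n y (j - 1) t))"
    and eq2: "\<forall>t. t \<noteq> 0 \<longrightarrow> (\<forall>j\<in>{1..n}.
        yext q n y j (q * t) - yext q n y (j - 1) (q * t)
        = b j * yext q n y j t / (1 + xext n x j (q * t) * yext q n y j t)
          - a j * yext q n y (j - 1) t / (1 + xext n x j (q * t) * yext q n y (j - 1) t))"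
    and rel: "\<forall>t. t \<noteq> 0 \<longrightarrow>
        (\<Prod>j\<in>{1..n}. a j * (1 + xext n x j (q * t) * yext q n y j t)
                          / (1 + xext n x j (q * t) * yext q n y (j - 1) t)) = sq ^ (n - 1)"
    and y0: "\<forall>j\<in>{1..n}. \<forall>t. y j t = 0"
  shows "\<forall>t. t \<noteq> 0 \<and> 1 - t / q \<noteq> 0 \<longrightarrow> (\<forall>i\<in>{1..n}.
      x i (t / q) = (\<Sum>j\<in>{1..n}. (A0 n a b i j + A1 n a b i j / (1 - t / q)) * x j t))"
proof (intro allI impI ballI)
  fix t i assume t: "t \<noteq> 0 \<and> 1 - t / q \<noteq> 0" and i: "i \<in> {1..n}"
  have "q \<noteq> 0" using q by auto
  have s: "t / q \<noteq> 0" "t / q \<noteq> 1" "q * (t / q) = t" using t \<open>q \<noteq> 0\<close> by auto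
  have y_zero: "yext q n y j r = 0" if "j \<le> n" for j r
    using y0 that n2 by (auto simp: yext_def)
  have step: "xext n x j (t / q) - xext n x (j - 1) (t / q)
      = a j * xext n x j (q * (t / q)) - bext q n b (j - 1) * xext n x (j - 1) (q * (t / q))"
    if "j \<in> {1..n}" for j
  proof -
    have "yext q n y (j - 1) (t / q) = 0" using that by (intro y_zero) auto
    then show ?thesis using eq1[rule_format, OF s(1) that] s(3) by simp
  qed
  show "x i (t / q) = (\<Sum>j\<in>{1..n}. (A0 n a b i j + A1 n a b i j / (1 - t / q)) * x j t)"
    using linear_qdiff_of_reduced_system[OF \<open>q \<noteq> 0\<close> s(2) i step] by (simp only: s(3))
qed

end
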